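(* Let $(X,\to,d_A)$ be a metric transition system over a finite set $A$ of actions, and let $\alpha\colon\mathit{DPMet}(\mathcal P(X))\to\mathrm{Pre}(\mathcal P(X))$ be $\alpha(d)=\{(X_1,X_2)\mid d(X_1,X_2)=0\}$. Then $\mu\,\beta_t=\alpha(\overline{\mu\,\beta_T})$, where $\mu\,\beta_t$ is the least fixpoint of $\beta_t$ in $(\mathit{Eq}(\mathcal P(X)),\supseteq)$, $\mu\,\beta_T$ is the least fixpoint of $\beta_T$ in $(\mathit{DPMet}(\mathcal P(X)),\le)$, and $\overline{d}(Y_1,Y_2)=\max\{d(Y_1,Y_2),d(Y_2,Y_1)\}$ denotes symmetrization.
   Context: A metric transition system: $(X,\to,d_A)$, $\to\subseteq X\times A\times X$, $d_A$ a metric on $A$ with values in $[0,1]$. $r\oplus s=\min\{r+s,1\}$, $r\ominus s=\max\{0,r-s\}$. $\mathit{DPMet}(Y)$: directed pseudo-metrics on $Y$ ($d(y,y)=0$, $d(x,z)\le d(x,y)\oplus d(y,z)$, values in $[0,1]$), ordered pointwise; $\mathrm{Pre}(Y)$, $\mathit{Eq}(Y)$: preorders, equivalences on $Y$. Qualitative: $\Diamond_a(S)=\{x\mid\exists x'\in S\colon x\xrightarrow{a}x'\}$; $\alpha_t(\mathcal S)=\{(X_1,X_2)\mid\forall S\in\mathcal S\colon(X_1\cap S\neq\emptyset\iff X_2\cap S\neq\emptyset)\}$, $\gamma_t(R)=\{S\subseteq X\mid\forall(X_1,X_2)\in R\colon(X_1\cap S\neq\emptyset\iff X_2\cap S\neq\emptyset)\}$,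 $\mathit{lo}_t(\mathcal S)=\bigcup_{a}\{\Diamond_a(S)\mid S\in\mathcal S\}\cup\{X\}$, $\beta_t=\alpha_t\circ\mathit{lo}_t\circ\gamma_t$. Quantitative: $\bigcirc_af(x)=\bigvee\{(1-d_A(b,a))\land f(x')\mid x\xrightarrow{b}x'\}$, $\tilde f(Y)=\bigvee_{x\in Y}f(x)$, $\alpha_T(\mathcal F)(X_1,X_2)=\bigvee_{f\in\mathcal F}(\tilde f(X_1)\ominus\tilde f(X_2))$, $\gamma_T(d)=\{f\mid\forall X_1,X_2\colon\tilde f(X_1)\ominus\tilde f(X_2)\le d(X_1,X_2)\}$, $\mathit{lo}_T(\mathcal F)=\bigcup_a\{\bigcirc_af\mid f\in\mathrm{cl}^{\mathrm{sh}}(\mathcal F)\}\cup\{1\}$ with $\mathrm{cl}^{\mathrm{sh}}$ the closure under constant shifts $f\mapsto f\ominus c$, $f\mapsto f\oplus c$, and $\beta_T=\alpha_T\circ\mathit{lo}_T\circ\gamma_T$. *)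

theory Defs
  imports Complex_Main
begin

(* supremum in [0,1]; the empty supremum is 0 (bottom of [0,1]) *)
definition sup01 :: "real set \<Rightarrow> real" where
  "sup01 S = (if S = {} then 0 else Sup S)"

definition tplus :: "real \<Rightarrow> real \<Rightarrow> real" where
  "tplus r s = min (r + s) 1"

definition tminus :: "real \<Rightarrow> real \<Rightarrow> real" where
  "tminus r s = max 0 (r - s)"

definition metric01 :: "('a \<Rightarrow> 'a \<Rightarrow> real) \<Rightarrow> bool" where
  "metric01 dA \<longleftrightarrow> (\<forall>a b. 0 \<le> dA a b \<and> dA a b \<le> 1) \<and> (\<forall>a b. dA a b = 0 \<longleftrightarrow> a = b)
     \<and> (\<forall>a b. dA a b = dA b a) \<and> (\<forall>a b c. dA a c \<le> dA a b + dA b c)"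

definition dpmet :: "('y \<Rightarrow> 'y \<Rightarrow> real) \<Rightarrow> bool" where
  "dpmet d \<longleftrightarrow> (\<forall>y. d y y = 0) \<and> (\<forall>x y z. d x z \<le> tplus (d x y) (d y z))
     \<and> (\<forall>x y. 0 \<le> d x y \<and> d x y \<le> 1)"

definition Diamond :: "('x \<times> 'a \<times> 'x) set \<Rightarrow> 'a \<Rightarrow> 'x set \<Rightarrow> 'x set" where
  "Diamond T a S = {x. \<exists>x'\<in>S. (x, a, x') \<in> T}"

definition alpha_t :: "'x set set \<Rightarrow> ('x set \<times> 'x set) set" where
  "alpha_t SS = {(X1, X2). \<forall>S\<in>SS. (X1 \<inter> S \<noteq> {} \<longleftrightarrow> X2 \<inter> S \<noteq> {})}"

definition gamma_t :: "('x set \<times> 'x set) set \<Rightarrow> 'x set set" where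
  "gamma_t R = {S. \<forall>(X1, X2)\<in>R. (X1 \<inter> S \<noteq> {} \<longleftrightarrow> X2 \<inter> S \<noteq> {})}"

definition lo_t :: "('x \<times> 'a \<times> 'x) set \<Rightarrow> 'x set set \<Rightarrow> 'x set set" where
  "lo_t T SS = (\<Union>a. Diamond T a ` SS) \<union> {UNIV}"

definition beta_t :: "('x \<times> 'a \<times> 'x) set \<Rightarrow> ('x set \<times> 'x set) set \<Rightarrow> ('x set \<times> 'x set) set" where
  "beta_t T R = alpha_t (lo_t T (gamma_t R))"

definition Next :: "('x \<times> 'a \<times> 'x) set \<Rightarrow> ('a \<Rightarrow> 'a \<Rightarrow> real) \<Rightarrow> 'a \<Rightarrow> ('x \<Rightarrow> real) \<Rightarrow> 'x \<Rightarrow> real" where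
  "Next T dA a f x = sup01 {min (1 - dA b a) (f x') | b x'. (x, b, x') \<in> T}"

definition lift :: "('x \<Rightarrow> real) \<Rightarrow> 'x set \<Rightarrow> real" where
  "lift f Y = sup01 (f ` Y)"

definition alpha_T :: "('x \<Rightarrow> real) set \<Rightarrow> 'x set \<Rightarrow> 'x set \<Rightarrow> real" where
  "alpha_T FF X1 X2 = sup01 {tminus (lift f X1) (lift f X2) | f. f \<in> FF}"

definition gamma_T :: "('x set \<Rightarrow> 'x set \<Rightarrow> real) \<Rightarrow> ('x \<Rightarrow> real) set" where
  "gamma_T d = {f. (\<forall>x. 0 \<le> f x \<and> f x \<le> 1) \<and>
      (\<forall>X1 X2. tminus (lift f X1) (lift f X2) \<le> d X1 X2)}"

inductive_set shcl :: "('x \<Rightarrow> real) set \<Rightarrow> ('x \<Rightarrow> real) set" for FF where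
  base: "f \<in> FF \<Longrightarrow> f \<in> shcl FF"
| minus: "f \<in> shcl FF \<Longrightarrow> 0 \<le> c \<Longrightarrow> c \<le> 1 \<Longrightarrow> (\<lambda>x. tminus (f x) c) \<in> shcl FF"
| plus: "f \<in> shcl FF \<Longrightarrow> 0 \<le> c \<Longrightarrow> c \<le> 1 \<Longrightarrow> (\<lambda>x. tplus (f x) c) \<in> shcl FF"

definition lo_T :: "('x \<times> 'a \<times> 'x) set \<Rightarrow> ('a \<Rightarrow> 'a \<Rightarrow> real) \<Rightarrow> ('x \<Rightarrow> real) set \<Rightarrow> ('x \<Rightarrow> real) set" where
  "lo_T T dA FF = (\<Union>a. Next T dA a ` shcl FF) \<union> {\<lambda>x. 1}"

definition beta_T :: "('x \<times> 'a \<times> 'x) set \<Rightarrow> ('a \<Rightarrow> 'a \<Rightarrow> real) \<Rightarrow>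
    ('x set \<Rightarrow> 'x set \<Rightarrow> real) \<Rightarrow> 'x set \<Rightarrow> 'x set \<Rightarrow> real" where
  "beta_T T dA d = alpha_T (lo_T T dA (gamma_T d))"

definition alpha0 :: "('y \<Rightarrow> 'y \<Rightarrow> real) \<Rightarrow> ('y \<times> 'y) set" where
  "alpha0 d = {(Y1, Y2). d Y1 Y2 = 0}"

definition symz :: "('y \<Rightarrow> 'y \<Rightarrow> real) \<Rightarrow> 'y \<Rightarrow> 'y \<Rightarrow> real" where
  "symz d Y1 Y2 = max (d Y1 Y2) (d Y2 Y1)"

(* R is the least fixpoint of beta_t in (Eq(P(X)), \<supseteq>) *)
definition is_lfp_t :: "('x \<times> 'a \<times> 'x) set \<Rightarrow> ('x set \<times> 'x set) set \<Rightarrow> bool" where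
  "is_lfp_t T R \<longleftrightarrow> equiv UNIV R \<and> beta_t T R = R \<and>
     (\<forall>R'. equiv UNIV R' \<and> beta_t T R' = R' \<longrightarrow> R' \<subseteq> R)"

definition is_lfp_T :: "('x \<times> 'a \<times> 'x) set \<Rightarrow> ('a \<Rightarrow> 'a \<Rightarrow> real) \<Rightarrow> ('x set \<Rightarrow> 'x set \<Rightarrow> real) \<Rightarrow> bool" where
  "is_lfp_T T dA d \<longleftrightarrow> dpmet d \<and> beta_T T dA d = d \<and>
     (\<forall>d'. dpmet d' \<and> beta_T T dA d' = d' \<longrightarrow> (\<forall>X1 X2. d X1 X2 \<le> d' X1 X2))"

end

theory Submission
  imports Defs
begin

(* The qualitative least fixpoint is trace equivalence on sets of states: X1 and X2 are related
   iff they meet the same sets Diamond a1 (... (Diamond an UNIV)), and every post-fixpoint of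
   beta_t lies inside this relation.

   Pointwise infima of directed pseudo-metrics may violate the triangle inequality, suprema do not;
   so the least fixpoint of beta_T is the supremum of the pseudo-metrics below every pre-fixpoint.
   It vanishes on trace-equivalent pairs since the 0/1 distance of trace equivalence is itself a
   pre-fixpoint: its shifted test functions have lifts constant on trace-equivalence classes, and
   Next a turns such functions into ones whose lifts are again constant there.  Conversely, for a
   pre-fixpoint d and S = Diamond a1 (... UNIV), induction on S yields a test function in
   gamma_T d equal to 1 on S and at most 1 - eps off S, the gap coming from the least distance
   between distinct actions, which is positive as there are finitely many.  So d X1 X2 = 0 forces
   every such S met by X1 to be met by X2. *)

lemma sup01_upper: "(\<And>s. s \<in> S \<Longrightarrow> s \<le> B) \<Longrightarrow> x \<in> S \<Longrightarrow> x \<le> sup01 S"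
  unfolding sup01_def by (auto intro!: cSup_upper bdd_aboveI)

lemma sup01_least: "(\<And>s. s \<in> S \<Longrightarrow> s \<le> b) \<Longrightarrow> 0 \<le> b \<Longrightarrow> sup01 S \<le> b"
  unfolding sup01_def by (auto intro!: cSup_least)

lemma sup01_nonneg:
  assumes "\<And>s. s \<in> S \<Longrightarrow> 0 \<le> s" and "\<And>s. s \<in> S \<Longrightarrow> s \<le> B"
  shows "0 \<le> sup01 S"
proof (cases "S = {}")
  case False
  then obtain x where "x \<in> S" by auto
  with assms show ?thesis using sup01_upper[of S B x] by force
qed (simp add: sup01_def)

lemma sup01_unit:
  "(\<And>s. s \<in> S \<Longrightarrow> 0 \<le> s \<and> s \<le> 1) \<Longrightarrow> 0 \<le> sup01 S \<and> sup01 S \<le> 1"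
  by (meson sup01_least sup01_nonneg zero_le_one)

definition unit_valued :: "('x \<Rightarrow> real) \<Rightarrow> bool" where
  "unit_valued f \<longleftrightarrow> (\<forall>x. 0 \<le> f x \<and> f x \<le> 1)"

lemma unit_valued_const_one [simp]: "unit_valued (\<lambda>x. 1)"
  by (simp add: unit_valued_def)

lemma lift_unit: "unit_valued f \<Longrightarrow> 0 \<le> lift f Y \<and> lift f Y \<le> 1"
  unfolding lift_def unit_valued_def by (auto intro!: sup01_unit)

lemma lift_upper: "unit_valued f \<Longrightarrow> x \<in> Y \<Longrightarrow> f x \<le> lift f Y"
  unfolding lift_def unit_valued_def by (rule sup01_upper[where B=1]) auto

lemma lift_least: "(\<And>x. x \<in> Y \<Longrightarrow> f x \<le> b) \<Longrightarrow> 0 \<le> b \<Longrightarrow> lift f Y \<le> b"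
  unfolding lift_def by (rule sup01_least) auto

lemma lift_empty [simp]: "lift f {} = 0"
  unfolding lift_def sup01_def by simp

lemma lift_const_one: "lift (\<lambda>x. 1) Y = (if Y = {} then 0 else 1)"
  unfolding lift_def sup01_def by auto

lemma lift_mono_cont_comp:
  assumes "mono \<phi>" "\<And>t. isCont \<phi> t" "unit_valued f"
  shows "lift (\<lambda>x. \<phi> (f x)) Y = (if Y = {} then 0 else \<phi> (lift f Y))"
proof (cases "Y = {}")
  case False
  have bdd: "bdd_above (f ` Y)" using assms(3) unfolding unit_valued_def by (auto intro!: bdd_aboveI)
  have "\<phi> (Sup (f ` Y)) = (SUP s\<in>f ` Y. \<phi> s)"
    by (rule continuous_at_Sup_mono[OF assms(1)])
       (use assms False bdd in \<open>auto intro: continuous_at_imp_continuous_at_within\<close>)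
  then show ?thesis using False unfolding lift_def sup01_def by (simp add: image_image)
qed simp

lemma tminus_unit: "0 \<le> a \<Longrightarrow> a \<le> 1 \<Longrightarrow> 0 \<le> b \<Longrightarrow> 0 \<le> tminus a b \<and> tminus a b \<le> 1"
  unfolding tminus_def by auto

lemma mono_tminus: "mono (\<lambda>t. tminus t c)"
  unfolding mono_def tminus_def by auto

lemma mono_tplus: "mono (\<lambda>t. tplus t c)"
  unfolding mono_def tplus_def by auto

lemma isCont_tminus: "isCont (\<lambda>t. tminus t c) t"
  unfolding tminus_def by (intro continuous_intros)

lemma isCont_tplus: "isCont (\<lambda>t. tplus t c) t"
  unfolding tplus_def by (intro continuous_intros)

lemma tplus_mono: "a \<le> a' \<Longrightarrow> b \<le> b' \<Longrightarrow> tplus a b \<le> tplus a' b'"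
  unfolding tplus_def by auto

lemma dpmet_unit: "dpmet d \<Longrightarrow> 0 \<le> d x y \<and> d x y \<le> 1"
  unfolding dpmet_def by blast

lemma shcl_unit_valued: "g \<in> shcl FF \<Longrightarrow> (\<And>f. f \<in> FF \<Longrightarrow> unit_valued f) \<Longrightarrow> unit_valued g"
proof (induction rule: shcl.induct)
  case (minus f c) then show ?case unfolding unit_valued_def tminus_def by (smt (verit))
next
  case (plus f c) then show ?case unfolding unit_valued_def tplus_def by (smt (verit))
qed auto

lemma shcl_mono: "g \<in> shcl FF \<Longrightarrow> FF \<subseteq> GG \<Longrightarrow> g \<in> shcl GG"
  by (induction rule: shcl.induct) (auto intro: shcl.intros)

lemma metric01_unit: "metric01 dA \<Longrightarrow> 0 \<le> dA a b \<and> dA a b \<le> 1"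
  unfolding metric01_def by blast

lemma Next_unit_valued: "metric01 dA \<Longrightarrow> unit_valued f \<Longrightarrow> unit_valued (Next T dA a f)"
  unfolding unit_valued_def Next_def
  by (fastforce intro!: sup01_unit dest: metric01_unit simp: min_le_iff_disj)

lemma Next_upper:
  assumes "metric01 dA" "unit_valued f" "(x, b, x') \<in> T"
  shows "min (1 - dA b a) (f x') \<le> Next T dA a f x"
  unfolding Next_def
  by (rule sup01_upper[where B=1])
     (use assms in \<open>auto dest: metric01_unit simp: min_le_iff_disj unit_valued_def\<close>)

lemma gamma_T_unit_valued: "f \<in> gamma_T d \<Longrightarrow> unit_valued f"
  unfolding gamma_T_def unit_valued_def by auto

lemma gamma_TD: "f \<in> gamma_T d \<Longrightarrow> tminus (lift f X1) (lift f X2) \<le> d X1 X2"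
  unfolding gamma_T_def by auto

lemma gamma_TI:
  "unit_valued f \<Longrightarrow> (\<And>X1 X2. tminus (lift f X1) (lift f X2) \<le> d X1 X2) \<Longrightarrow> f \<in> gamma_T d"
  unfolding gamma_T_def unit_valued_def by auto

lemma lo_T_cases:
  assumes "h \<in> lo_T T dA FF"
  obtains "h = (\<lambda>x. 1)" | a g where "g \<in> shcl FF" "h = Next T dA a g"
  using assms unfolding lo_T_def by auto

lemma lo_T_unit_valued:
  assumes "metric01 dA" "\<And>f. f \<in> FF \<Longrightarrow> unit_valued f" "h \<in> lo_T T dA FF"
  shows "unit_valued h"
  using assms(3) by (cases rule: lo_T_cases) (auto intro: Next_unit_valued[OF assms(1)] shcl_unit_valued assms(2))

lemma alpha_T_upper:
  assumes "\<And>f. f \<in> FF \<Longrightarrow> unit_valued f" "f \<in> FF"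
  shows "tminus (lift f X1) (lift f X2) \<le> alpha_T FF X1 X2"
  unfolding alpha_T_def
  by (rule sup01_upper[where B=1]) (use assms lift_unit tminus_unit in \<open>fastforce+\<close>)

lemma alpha_T_least:
  "(\<And>f. f \<in> FF \<Longrightarrow> tminus (lift f X1) (lift f X2) \<le> b) \<Longrightarrow> 0 \<le> b \<Longrightarrow> alpha_T FF X1 X2 \<le> b"
  unfolding alpha_T_def by (auto intro!: sup01_least)

lemma alpha_T_unit:
  assumes "\<And>f. f \<in> FF \<Longrightarrow> unit_valued f"
  shows "0 \<le> alpha_T FF X1 X2 \<and> alpha_T FF X1 X2 \<le> 1"
  unfolding alpha_T_def by (rule sup01_unit) (use assms lift_unit tminus_unit in fastforce)

lemma alpha_T_dpmet:
  assumes unit: "\<And>f. f \<in> FF \<Longrightarrow> unit_valued f"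
  shows "dpmet (alpha_T FF)"
  unfolding dpmet_def
proof (intro conjI allI)
  fix y
  have "alpha_T FF y y \<le> 0" by (rule alpha_T_least) (auto simp: tminus_def)
  then show "alpha_T FF y y = 0" using alpha_T_unit[of FF y y, OF unit] by simp
next
  fix x y z
  show "alpha_T FF x z \<le> tplus (alpha_T FF x y) (alpha_T FF y z)"
  proof (rule alpha_T_least)
    fix f assume f: "f \<in> FF"
    have "tminus (lift f x) (lift f z) \<le> tminus (lift f x) (lift f y) + tminus (lift f y) (lift f z)"
      unfolding tminus_def by auto
    also have "\<dots> \<le> alpha_T FF x y + alpha_T FF y z"
      using alpha_T_upper[OF unit f] by (simp add: add_mono)
    moreover have "tminus (lift f x) (lift f z) \<le> 1"
      using lift_unit tminus_unit unit f by meson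
    ultimately show "tminus (lift f x) (lift f z) \<le> tplus (alpha_T FF x y) (alpha_T FF y z)"
      unfolding tplus_def by simp
  qed (use alpha_T_unit[OF unit] in \<open>simp add: tplus_def\<close>)
qed (use alpha_T_unit[OF unit] in auto)

lemma beta_T_dpmet: "metric01 dA \<Longrightarrow> dpmet (beta_T T dA d)"
  unfolding beta_T_def
  by (rule alpha_T_dpmet) (auto intro: lo_T_unit_valued gamma_T_unit_valued)

lemma beta_T_upper:
  "metric01 dA \<Longrightarrow> h \<in> lo_T T dA (gamma_T d) \<Longrightarrow>
    tminus (lift h X1) (lift h X2) \<le> beta_T T dA d X1 X2"
  unfolding beta_T_def
  by (rule alpha_T_upper) (auto intro: lo_T_unit_valued gamma_T_unit_valued)

lemma beta_T_unit: "metric01 dA \<Longrightarrow> 0 \<le> beta_T T dA d X1 X2 \<and> beta_T T dA d X1 X2 \<le> 1"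
  using beta_T_dpmet unfolding dpmet_def by blast

lemma beta_T_mono:
  assumes dA: "metric01 dA" and "d \<le> d'"
  shows "beta_T T dA d \<le> beta_T T dA d'"
proof (intro le_funI)
  fix X1 X2
  have "gamma_T d \<subseteq> gamma_T d'"
    using \<open>d \<le> d'\<close> unfolding gamma_T_def le_fun_def by (blast intro: order_trans)
  then have sub: "lo_T T dA (gamma_T d) \<subseteq> lo_T T dA (gamma_T d')"
    unfolding lo_T_def by (auto intro: shcl_mono)
  show "beta_T T dA d X1 X2 \<le> beta_T T dA d' X1 X2"
    unfolding beta_T_def[of T dA d]
  proof (rule alpha_T_least)
    fix h assume "h \<in> lo_T T dA (gamma_T d)"
    with sub show "tminus (lift h X1) (lift h X2) \<le> beta_T T dA d' X1 X2"
      by (blast intro: beta_T_upper[OF dA])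
  qed (use beta_T_unit[OF dA] in blast)
qed

section \<open>Least fixpoints on directed pseudo-metrics\<close>

definition below_prefixpoints ::
    "(('y \<Rightarrow> 'y \<Rightarrow> real) \<Rightarrow> 'y \<Rightarrow> 'y \<Rightarrow> real) \<Rightarrow> ('y \<Rightarrow> 'y \<Rightarrow> real) set" where
  "below_prefixpoints F = {e. dpmet e \<and> (\<forall>d. dpmet d \<longrightarrow> F d \<le> d \<longrightarrow> e \<le> d)}"

definition dpmet_lfp :: "(('y \<Rightarrow> 'y \<Rightarrow> real) \<Rightarrow> 'y \<Rightarrow> 'y \<Rightarrow> real) \<Rightarrow> 'y \<Rightarrow> 'y \<Rightarrow> real" where
  "dpmet_lfp F x y = Sup ((\<lambda>e. e x y) ` below_prefixpoints F)"

lemma zero_below_prefixpoints: "(\<lambda>_ _. 0) \<in> below_prefixpoints F"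
  unfolding below_prefixpoints_def dpmet_def tplus_def le_fun_def by (auto dest: dpmet_unit)

lemma dpmet_lfp_upper: "e \<in> below_prefixpoints F \<Longrightarrow> e x y \<le> dpmet_lfp F x y"
  unfolding dpmet_lfp_def below_prefixpoints_def
  by (rule cSup_upper) (auto intro!: bdd_aboveI[where M=1] dest: dpmet_unit)

lemma dpmet_lfp_least:
  "(\<And>e. e \<in> below_prefixpoints F \<Longrightarrow> e x y \<le> b) \<Longrightarrow> dpmet_lfp F x y \<le> b"
  unfolding dpmet_lfp_def using zero_below_prefixpoints by (blast intro: cSup_least)

lemma dpmet_lfp_le_prefixpoint: "dpmet d \<Longrightarrow> F d \<le> d \<Longrightarrow> dpmet_lfp F \<le> d"
  by (auto intro!: le_funI dpmet_lfp_least simp: below_prefixpoints_def le_fun_def)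

lemma dpmet_dpmet_lfp: "dpmet (dpmet_lfp F)"
  unfolding dpmet_def
proof (intro conjI allI)
  fix y
  have "dpmet_lfp F y y \<le> 0"
    by (rule dpmet_lfp_least) (auto simp: below_prefixpoints_def dpmet_def)
  then show "dpmet_lfp F y y = 0"
    using dpmet_lfp_upper[OF zero_below_prefixpoints, of F y y] by simp
next
  fix x y z
  show "dpmet_lfp F x z \<le> tplus (dpmet_lfp F x y) (dpmet_lfp F y z)"
  proof (rule dpmet_lfp_least)
    fix e assume e: "e \<in> below_prefixpoints F"
    then have "e x z \<le> tplus (e x y) (e y z)" unfolding below_prefixpoints_def dpmet_def by blast
    also have "\<dots> \<le> tplus (dpmet_lfp F x y) (dpmet_lfp F y z)"
      by (intro tplus_mono dpmet_lfp_upper e)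
    finally show "e x z \<le> tplus (dpmet_lfp F x y) (dpmet_lfp F y z)" .
  qed
next
  fix x y
  show "0 \<le> dpmet_lfp F x y" using dpmet_lfp_upper[OF zero_below_prefixpoints, of F x y] by simp
  show "dpmet_lfp F x y \<le> 1"
    by (rule dpmet_lfp_least) (auto simp: below_prefixpoints_def dest: dpmet_unit)
qed

lemma dpmet_lfp_fixpoint:
  assumes closed: "\<And>d. dpmet d \<Longrightarrow> dpmet (F d)"
    and mono: "\<And>d d'. dpmet d \<Longrightarrow> dpmet d' \<Longrightarrow> d \<le> d' \<Longrightarrow> F d \<le> F d'"
  shows "F (dpmet_lfp F) = dpmet_lfp F"
proof (rule antisym)
  let ?m = "dpmet_lfp F"
  have "F ?m \<in> below_prefixpoints F"
    unfolding below_prefixpoints_def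
  proof (intro CollectI conjI allI impI)
    show "dpmet (F ?m)" by (rule closed[OF dpmet_dpmet_lfp])
    fix d assume d: "dpmet d" "F d \<le> d"
    have "F ?m \<le> F d" by (rule mono[OF dpmet_dpmet_lfp d(1) dpmet_lfp_le_prefixpoint[of d F, OF d]])
    then show "F ?m \<le> d" using d(2) by (rule order_trans)
  qed
  then show le: "F ?m \<le> ?m" by (auto intro: le_funI dpmet_lfp_upper)
  have "F (F ?m) \<le> F ?m" by (rule mono[OF closed[OF dpmet_dpmet_lfp] dpmet_dpmet_lfp le])
  then show "?m \<le> F ?m" by (rule dpmet_lfp_le_prefixpoint[OF closed[OF dpmet_dpmet_lfp]])
qed

lemma is_lfp_T_dpmet_lfp:
  assumes "metric01 dA"
  shows "is_lfp_T T dA (dpmet_lfp (beta_T T dA))"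
  unfolding is_lfp_T_def
proof (intro conjI allI impI)
  show "dpmet (dpmet_lfp (beta_T T dA))" by (rule dpmet_dpmet_lfp)
  show "beta_T T dA (dpmet_lfp (beta_T T dA)) = dpmet_lfp (beta_T T dA)"
    by (rule dpmet_lfp_fixpoint) (use assms beta_T_dpmet beta_T_mono in auto)
  fix d X1 X2 assume "dpmet d \<and> beta_T T dA d = d"
  then have "dpmet_lfp (beta_T T dA) \<le> d" by (intro dpmet_lfp_le_prefixpoint) auto
  then show "dpmet_lfp (beta_T T dA) X1 X2 \<le> d X1 X2" by (simp add: le_fun_def)
qed

section \<open>Trace equivalence of sets of states\<close>

inductive_set Diamond_closure :: "('x \<times> 'a \<times> 'x) set \<Rightarrow> 'x set set" for T where
  UNIV_in: "UNIV \<in> Diamond_closure T"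
| Diamond_in: "S \<in> Diamond_closure T \<Longrightarrow> Diamond T a S \<in> Diamond_closure T"

definition trace_equiv :: "('x \<times> 'a \<times> 'x) set \<Rightarrow> ('x set \<times> 'x set) set" where
  "trace_equiv T = alpha_t (Diamond_closure T)"

definition Post :: "('x \<times> 'a \<times> 'x) set \<Rightarrow> 'a \<Rightarrow> 'x set \<Rightarrow> 'x set" where
  "Post T b X = {x'. \<exists>x\<in>X. (x, b, x') \<in> T}"

lemma Post_meets_iff: "(Post T b X \<inter> S \<noteq> {}) \<longleftrightarrow> (X \<inter> Diamond T b S \<noteq> {})"
  unfolding Post_def Diamond_def by auto

lemma alpha_tI:
  "(\<And>S. S \<in> SS \<Longrightarrow> (X1 \<inter> S \<noteq> {}) = (X2 \<inter> S \<noteq> {})) \<Longrightarrow> (X1, X2) \<in> alpha_t SS"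
  unfolding alpha_t_def by auto

lemma alpha_tD: "(X1, X2) \<in> alpha_t SS \<Longrightarrow> S \<in> SS \<Longrightarrow> (X1 \<inter> S \<noteq> {}) = (X2 \<inter> S \<noteq> {})"
  unfolding alpha_t_def by auto

lemma gamma_tD: "S \<in> gamma_t R \<Longrightarrow> (X1, X2) \<in> R \<Longrightarrow> (X1 \<inter> S \<noteq> {}) = (X2 \<inter> S \<noteq> {})"
  unfolding gamma_t_def by auto

lemma equiv_alpha_t: "equiv UNIV (alpha_t SS)"
  unfolding equiv_def refl_on_def sym_def trans_def alpha_t_def by auto

lemma trace_equiv_sym: "(X1, X2) \<in> trace_equiv T \<Longrightarrow> (X2, X1) \<in> trace_equiv T"
  unfolding trace_equiv_def alpha_t_def by auto

lemma trace_equiv_empty_iff: "(X1, X2) \<in> trace_equiv T \<Longrightarrow> X1 = {} \<longleftrightarrow> X2 = {}"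
  using alpha_tD[OF _ UNIV_in] unfolding trace_equiv_def by auto

lemma trace_equiv_Post:
  assumes "(X1, X2) \<in> trace_equiv T"
  shows "(Post T b X1, Post T b X2) \<in> trace_equiv T"
  unfolding trace_equiv_def
proof (rule alpha_tI)
  fix S assume "S \<in> Diamond_closure T"
  then have "Diamond T b S \<in> Diamond_closure T" by (rule Diamond_in)
  with assms show "(Post T b X1 \<inter> S \<noteq> {}) = (Post T b X2 \<inter> S \<noteq> {})"
    unfolding trace_equiv_def by (simp add: Post_meets_iff alpha_tD)
qed

lemma subset_gamma_t_alpha_t: "SS \<subseteq> gamma_t (alpha_t SS)"
  unfolding gamma_t_def alpha_t_def by auto

lemma beta_t_trace_equiv_subset: "beta_t T (trace_equiv T) \<subseteq> trace_equiv T"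
proof -
  have "Diamond_closure T \<subseteq> lo_t T (gamma_t (trace_equiv T))"
  proof
    fix S assume "S \<in> Diamond_closure T"
    then show "S \<in> lo_t T (gamma_t (trace_equiv T))"
    proof cases
      case (Diamond_in S' a)
      then have "S' \<in> gamma_t (trace_equiv T)"
        unfolding trace_equiv_def using subset_gamma_t_alpha_t by blast
      then show ?thesis unfolding lo_t_def Diamond_in(1) by auto
    qed (auto simp: lo_t_def)
  qed
  then show ?thesis unfolding beta_t_def trace_equiv_def alpha_t_def by blast
qed

lemma trace_equiv_subset_beta_t: "trace_equiv T \<subseteq> beta_t T (trace_equiv T)"
proof clarify
  fix X1 X2 assume X: "(X1, X2) \<in> trace_equiv T"
  show "(X1, X2) \<in> beta_t T (trace_equiv T)"
    unfolding beta_t_def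
  proof (rule alpha_tI)
    fix S' assume "S' \<in> lo_t T (gamma_t (trace_equiv T))"
    then consider "S' = UNIV" | a S where "S \<in> gamma_t (trace_equiv T)" "S' = Diamond T a S"
      unfolding lo_t_def by auto
    then show "(X1 \<inter> S' \<noteq> {}) = (X2 \<inter> S' \<noteq> {})"
    proof cases
      case 1
      then show ?thesis using trace_equiv_empty_iff[OF X] by simp
    next
      case (2 a S)
      with trace_equiv_Post[OF X, of a] show ?thesis by (metis gamma_tD Post_meets_iff)
    qed
  qed
qed

lemma postfixpoint_subset_trace_equiv:
  assumes post: "R \<subseteq> beta_t T R"
  shows "R \<subseteq> trace_equiv T"
proof -
  have agree: "S \<in> gamma_t R" if "S \<in> lo_t T (gamma_t R)" for S
    using post that unfolding gamma_t_def beta_t_def alpha_t_def by blast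
  have "S \<in> gamma_t R" if "S \<in> Diamond_closure T" for S
    using that
  proof induction
    case UNIV_in
    show ?case by (rule agree) (simp add: lo_t_def)
  next
    case (Diamond_in S a)
    then show ?case by (intro agree) (auto simp: lo_t_def)
  qed
  then show ?thesis
    unfolding trace_equiv_def by (auto intro!: alpha_tI gamma_tD)
qed

lemma is_lfp_t_trace_equiv: "is_lfp_t T (trace_equiv T)"
  unfolding is_lfp_t_def
proof (intro conjI allI impI)
  show "equiv UNIV (trace_equiv T)" unfolding trace_equiv_def by (rule equiv_alpha_t)
  show "beta_t T (trace_equiv T) = trace_equiv T"
    using beta_t_trace_equiv_subset trace_equiv_subset_beta_t by (rule antisym)
  fix R assume "equiv UNIV R \<and> beta_t T R = R"
  then show "R \<subseteq> trace_equiv T" by (intro postfixpoint_subset_trace_equiv) simp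
qed

section \<open>Trace-equivalent sets are at distance zero\<close>

definition discrete_dist :: "('y \<times> 'y) set \<Rightarrow> 'y \<Rightarrow> 'y \<Rightarrow> real" where
  "discrete_dist R y1 y2 = (if (y1, y2) \<in> R then 0 else 1)"

lemma dpmet_discrete_dist:
  assumes "refl R" "trans R"
  shows "dpmet (discrete_dist R)"
  using assms unfolding dpmet_def discrete_dist_def tplus_def refl_on_def trans_def by auto

lemma lift_gamma_T_discrete_dist:
  assumes "f \<in> gamma_T (discrete_dist R)" "sym R" "(Y1, Y2) \<in> R"
  shows "lift f Y1 = lift f Y2"
proof -
  have "lift f Z1 \<le> lift f Z2" if "(Z1, Z2) \<in> R" for Z1 Z2
    using gamma_TD[OF assms(1), of Z1 Z2] that unfolding discrete_dist_def tminus_def by auto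
  with assms(2,3) show ?thesis by (meson antisym symD)
qed

lemma lift_shcl_invariant:
  assumes "g \<in> shcl FF" "(Y1, Y2) \<in> R"
    and unit: "\<And>f. f \<in> FF \<Longrightarrow> unit_valued f"
    and invariant: "\<And>f Y1 Y2. f \<in> FF \<Longrightarrow> (Y1, Y2) \<in> R \<Longrightarrow> lift f Y1 = lift f Y2"
    and empty_iff: "\<And>Y1 Y2. (Y1, Y2) \<in> R \<Longrightarrow> Y1 = {} \<longleftrightarrow> Y2 = {}"
  shows "lift g Y1 = lift g Y2"
  using assms(1,2)
proof (induction arbitrary: Y1 Y2 rule: shcl.induct)
  case (base f)
  then show ?case by (rule invariant)
next
  case (minus f c)
  have "unit_valued f" using minus(1) unit by (rule shcl_unit_valued)
  with minus.IH[OF minus(5)] empty_iff[OF minus(5)] show ?case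
    by (simp add: lift_mono_cont_comp[OF mono_tminus isCont_tminus])
next
  case (plus f c)
  have "unit_valued f" using plus(1) unit by (rule shcl_unit_valued)
  with plus.IH[OF plus(5)] empty_iff[OF plus(5)] show ?case
    by (simp add: lift_mono_cont_comp[OF mono_tplus isCont_tplus])
qed

lemma lift_Post_le_lift_Next:
  assumes dA: "metric01 dA" and g: "unit_valued g" and ne: "Post T b X \<noteq> {}"
  shows "min (1 - dA b a) (lift g (Post T b X)) \<le> lift (Next T dA a g) X"
proof -
  have N: "unit_valued (Next T dA a g)" by (rule Next_unit_valued[OF dA g])
  have "mono (\<lambda>t. min (1 - dA b a) t)" by (auto intro: monoI)
  moreover have "isCont (\<lambda>t. min (1 - dA b a) t) t" for t by (intro continuous_intros)
  ultimately have "min (1 - dA b a) (lift g (Post T b X))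
      = lift (\<lambda>y. min (1 - dA b a) (g y)) (Post T b X)"
    using lift_mono_cont_comp[OF _ _ g] ne by presburger
  also have "\<dots> \<le> lift (Next T dA a g) X"
  proof (rule lift_least)
    fix y assume "y \<in> Post T b X"
    then obtain x where x: "x \<in> X" "(x, b, y) \<in> T" unfolding Post_def by auto
    have "min (1 - dA b a) (g y) \<le> Next T dA a g x" by (rule Next_upper[OF dA g x(2)])
    also have "\<dots> \<le> lift (Next T dA a g) X" by (rule lift_upper[OF N x(1)])
    finally show "min (1 - dA b a) (g y) \<le> lift (Next T dA a g) X" .
  qed (use lift_unit[OF N] in blast)
  finally show ?thesis .
qed

lemma lift_Next_mono_trace_equiv:
  assumes dA: "metric01 dA" and g: "unit_valued g"
    and invariant: "\<And>Y1 Y2. (Y1, Y2) \<in> trace_equiv T \<Longrightarrow> lift g Y1 = lift g Y2"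
    and X: "(X1, X2) \<in> trace_equiv T"
  shows "lift (Next T dA a g) X1 \<le> lift (Next T dA a g) X2"
proof (rule lift_least)
  have nonneg: "0 \<le> lift (Next T dA a g) X2" using lift_unit[OF Next_unit_valued[OF dA g]] by blast
  then show "0 \<le> lift (Next T dA a g) X2" .
  fix x assume x: "x \<in> X1"
  show "Next T dA a g x \<le> lift (Next T dA a g) X2"
    unfolding Next_def[of T dA a g x]
  proof (rule sup01_least[OF _ nonneg], clarify)
    fix b x' assume tr: "(x, b, x') \<in> T"
    have Y: "(Post T b X1, Post T b X2) \<in> trace_equiv T" by (rule trace_equiv_Post[OF X])
    have x': "x' \<in> Post T b X1" using x tr unfolding Post_def by auto
    have "min (1 - dA b a) (g x') \<le> min (1 - dA b a) (lift g (Post T b X1))"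
      using lift_upper[OF g x'] by linarith
    also have "\<dots> = min (1 - dA b a) (lift g (Post T b X2))" by (simp add: invariant[OF Y])
    also have "\<dots> \<le> lift (Next T dA a g) X2"
      using x' trace_equiv_empty_iff[OF Y] by (intro lift_Post_le_lift_Next[OF dA g]) auto
    finally show "min (1 - dA b a) (g x') \<le> lift (Next T dA a g) X2" .
  qed
qed

lemma beta_T_discrete_dist_trace_equiv:
  assumes dA: "metric01 dA"
  shows "beta_T T dA (discrete_dist (trace_equiv T)) \<le> discrete_dist (trace_equiv T)"
proof (intro le_funI)
  fix X1 X2
  let ?d = "discrete_dist (trace_equiv T)"
  have "beta_T T dA ?d X1 X2 \<le> 0" if X: "(X1, X2) \<in> trace_equiv T"
    unfolding beta_T_def
  proof (rule alpha_T_least)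
    fix h assume "h \<in> lo_T T dA (gamma_T ?d)"
    then have "lift h X1 \<le> lift h X2"
    proof (cases rule: lo_T_cases)
      case 1
      then show ?thesis using trace_equiv_empty_iff[OF X] by (simp add: lift_const_one)
    next
      case (2 a g)
      have sym: "sym (trace_equiv T)" by (meson trace_equiv_sym symI)
      have "lift g Y1 = lift g Y2" if "(Y1, Y2) \<in> trace_equiv T" for Y1 Y2
        by (rule lift_shcl_invariant[OF 2(1) that])
           (auto intro: gamma_T_unit_valued lift_gamma_T_discrete_dist[OF _ sym]
             dest: trace_equiv_empty_iff)
      with 2 show ?thesis
        by (metis lift_Next_mono_trace_equiv[OF dA] X shcl_unit_valued gamma_T_unit_valued)
    qed
    then show "tminus (lift h X1) (lift h X2) \<le> 0" unfolding tminus_def by simp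
  qed simp
  then show "beta_T T dA ?d X1 X2 \<le> ?d X1 X2"
    using beta_T_unit[OF dA, of T ?d X1 X2] unfolding discrete_dist_def by auto
qed

lemma trace_equiv_imp_dpmet_lfp_zero:
  assumes "metric01 dA" "(X1, X2) \<in> trace_equiv T"
  shows "dpmet_lfp (beta_T T dA) X1 X2 = 0"
proof -
  have "dpmet (discrete_dist (trace_equiv T))"
    using equiv_alpha_t[of "Diamond_closure T"] unfolding trace_equiv_def equiv_def
    by (blast intro: dpmet_discrete_dist)
  then have "dpmet_lfp (beta_T T dA) \<le> discrete_dist (trace_equiv T)"
    by (rule dpmet_lfp_le_prefixpoint) (rule beta_T_discrete_dist_trace_equiv[OF assms(1)])
  then show ?thesis
    using assms(2) dpmet_unit[OF dpmet_dpmet_lfp, of "beta_T T dA" X1 X2]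
    unfolding le_fun_def discrete_dist_def by (metis antisym)
qed

section \<open>Sets at distance zero are trace equivalent\<close>

lemma lo_T_gamma_T_prefixpoint:
  assumes "metric01 dA" "beta_T T dA d \<le> d" "h \<in> lo_T T dA (gamma_T d)"
  shows "h \<in> gamma_T d"
proof (rule gamma_TI)
  show "unit_valued h" by (rule lo_T_unit_valued[OF assms(1) gamma_T_unit_valued assms(3)])
  fix X1 X2
  have "tminus (lift h X1) (lift h X2) \<le> beta_T T dA d X1 X2" by (rule beta_T_upper[OF assms(1,3)])
  also have "\<dots> \<le> d X1 X2" using assms(2) by (simp add: le_fun_def)
  finally show "tminus (lift h X1) (lift h X2) \<le> d X1 X2" .
qed

lemma metric01_finite_separated:
  fixes dA :: "'a::finite \<Rightarrow> 'a \<Rightarrow> real"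
  assumes "metric01 dA"
  obtains \<delta> where "0 < \<delta>" "\<And>b. b \<noteq> a \<Longrightarrow> \<delta> \<le> dA b a"
proof
  let ?D = "insert 1 ((\<lambda>b. dA b a) ` {b. b \<noteq> a})"
  have "\<And>b. b \<noteq> a \<Longrightarrow> 0 < dA b a"
    using assms unfolding metric01_def by (metis less_eq_real_def)
  then show "0 < Min ?D" by (subst Min_gr_iff) auto
  show "Min ?D \<le> dA b a" if "b \<noteq> a" for b using that by (intro Min_le) auto
qed

definition separates :: "real \<Rightarrow> ('x \<Rightarrow> real) \<Rightarrow> 'x set \<Rightarrow> bool" where
  "separates \<epsilon> g S \<longleftrightarrow> 0 < \<epsilon> \<and> \<epsilon> \<le> 1 \<and> (\<forall>x\<in>S. g x = 1) \<and> (\<forall>x. x \<notin> S \<longrightarrow> g x \<le> 1 - \<epsilon>)"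

lemma Next_separates_Diamond:
  fixes dA :: "'a::finite \<Rightarrow> 'a \<Rightarrow> real"
  assumes dA: "metric01 dA" and g: "unit_valued g" and sep: "separates \<epsilon> g S"
  obtains \<epsilon>' where "separates \<epsilon>' (Next T dA a g) (Diamond T a S)"
proof -
  obtain \<delta> where \<delta>: "0 < \<delta>" "\<And>b. b \<noteq> a \<Longrightarrow> \<delta> \<le> dA b a"
    using metric01_finite_separated[OF dA] by blast
  have N: "unit_valued (Next T dA a g)" by (rule Next_unit_valued[OF dA g])
  have "Next T dA a g x = 1" if x: "x \<in> Diamond T a S" for x
  proof -
    obtain x' where x': "x' \<in> S" "(x, a, x') \<in> T" using x unfolding Diamond_def by auto
    have "dA a a = 0" using dA unfolding metric01_def by blast
    then have "1 \<le> Next T dA a g x" using Next_upper[OF dA g x'(2), of a] sep x'(1)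
      by (simp add: separates_def)
    with N show ?thesis unfolding unit_valued_def by (meson antisym)
  qed
  moreover have "Next T dA a g x \<le> 1 - min \<epsilon> \<delta>" if x: "x \<notin> Diamond T a S" for x
    unfolding Next_def
  proof (rule sup01_least, clarify)
    fix b x' assume tr: "(x, b, x') \<in> T"
    show "min (1 - dA b a) (g x') \<le> 1 - min \<epsilon> \<delta>"
    proof (cases "b = a")
      case True
      with x tr have "x' \<notin> S" unfolding Diamond_def by auto
      with sep show ?thesis unfolding separates_def by force
    next
      case False
      with \<delta>(2) show ?thesis by force
    qed
  qed (use sep in \<open>auto simp: separates_def\<close>)
  ultimately have "separates (min \<epsilon> \<delta>) (Next T dA a g) (Diamond T a S)"
    using sep \<delta>(1) unfolding separates_def by auto
  then show ?thesis by (rule that)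
qed

lemma Diamond_closure_separated:
  fixes T :: "('x \<times> 'a::finite \<times> 'x) set"
  assumes dA: "metric01 dA" and pre: "beta_T T dA d \<le> d" and S: "S \<in> Diamond_closure T"
  shows "\<exists>g \<epsilon>. g \<in> gamma_T d \<and> separates \<epsilon> g S"
  using S
proof induction
  case UNIV_in
  have "(\<lambda>x. 1) \<in> gamma_T d" by (rule lo_T_gamma_T_prefixpoint[OF dA pre]) (simp add: lo_T_def)
  moreover have "separates 1 (\<lambda>x. 1) UNIV" by (simp add: separates_def)
  ultimately show ?case by blast
next
  case (Diamond_in S a)
  then obtain g \<epsilon> where g: "g \<in> gamma_T d" and sep: "separates \<epsilon> g S" by blast
  obtain \<epsilon>' where "separates \<epsilon>' (Next T dA a g) (Diamond T a S)"
    using Next_separates_Diamond[OF dA gamma_T_unit_valued[OF g] sep] .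
  moreover have "Next T dA a g \<in> gamma_T d"
    using g by (intro lo_T_gamma_T_prefixpoint[OF dA pre]) (auto simp: lo_T_def intro: shcl.base)
  ultimately show ?case by blast
qed

lemma prefixpoint_kernel_meets:
  fixes T :: "('x \<times> 'a::finite \<times> 'x) set"
  assumes "metric01 dA" "beta_T T dA d \<le> d" "d X1 X2 = 0"
    and "S \<in> Diamond_closure T" "X1 \<inter> S \<noteq> {}"
  shows "X2 \<inter> S \<noteq> {}"
proof
  assume X2S: "X2 \<inter> S = {}"
  obtain g \<epsilon> where g: "g \<in> gamma_T d" and sep: "separates \<epsilon> g S"
    using Diamond_closure_separated[OF assms(1,2,4)] by blast
  have vg: "unit_valued g" by (rule gamma_T_unit_valued[OF g])
  from assms(5) obtain x where "x \<in> X1" "x \<in> S" by auto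
  then have "1 \<le> lift g X1" using lift_upper[OF vg] sep unfolding separates_def by fastforce
  moreover have "lift g X2 \<le> 1 - \<epsilon>"
    by (rule lift_least) (use X2S sep in \<open>auto simp: separates_def\<close>)
  moreover have "tminus (lift g X1) (lift g X2) \<le> 0" using gamma_TD[OF g, of X1 X2] assms(3) by simp
  ultimately show False using sep unfolding separates_def tminus_def by linarith
qed

lemma symz_zero_imp_trace_equiv:
  fixes T :: "('x \<times> 'a::finite \<times> 'x) set"
  assumes "metric01 dA" "dpmet d" "beta_T T dA d \<le> d" "symz d X1 X2 = 0"
  shows "(X1, X2) \<in> trace_equiv T"
proof -
  have "0 \<le> d X1 X2" "0 \<le> d X2 X1" using dpmet_unit[OF assms(2)] by blast+
  with assms(4) have "d X1 X2 = 0" "d X2 X1 = 0" unfolding symz_def by (auto simp: max_def split: if_splits)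
  note meets = this[THEN prefixpoint_kernel_meets[OF assms(1,3)]]
  show ?thesis unfolding trace_equiv_def
  proof (rule alpha_tI)
    fix S assume "S \<in> Diamond_closure T"
    with meets show "(X1 \<inter> S \<noteq> {}) = (X2 \<inter> S \<noteq> {})" by blast
  qed
qed

theorem mainTheorem17:
  fixes T :: "('x \<times> 'a::finite \<times> 'x) set"
    and dA :: "'a \<Rightarrow> 'a \<Rightarrow> real"
  assumes "metric01 dA"
  shows "\<exists>R d. is_lfp_t T R \<and> is_lfp_T T dA d \<and> R = alpha0 (symz d)"
proof (intro exI conjI)
  let ?m = "dpmet_lfp (beta_T T dA)"
  show "is_lfp_t T (trace_equiv T)" by (rule is_lfp_t_trace_equiv)
  show lfp: "is_lfp_T T dA ?m" by (rule is_lfp_T_dpmet_lfp[OF assms])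
  then have m: "dpmet ?m" "beta_T T dA ?m \<le> ?m" unfolding is_lfp_T_def by auto
  have "(X1, X2) \<in> trace_equiv T \<longleftrightarrow> (X1, X2) \<in> alpha0 (symz ?m)" for X1 X2
  proof
    assume X: "(X1, X2) \<in> trace_equiv T"
    show "(X1, X2) \<in> alpha0 (symz ?m)"
      using trace_equiv_imp_dpmet_lfp_zero[OF assms X] trace_equiv_imp_dpmet_lfp_zero[OF assms trace_equiv_sym[OF X]]
      unfolding alpha0_def symz_def by simp
  next
    assume "(X1, X2) \<in> alpha0 (symz ?m)"
    then show "(X1, X2) \<in> trace_equiv T"
      unfolding alpha0_def by (simp add: symz_zero_imp_trace_equiv[OF assms m])
  qed
  then show "trace_equiv T = alpha0 (symz ?m)" by (simp add: set_eq_iff)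
qed

end
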